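(* Let $d\in\mathbb{N}$, $\mu_0,\ldots,\mu_d\in\mathbb{R}\setminus\{0\}$, $S_-=\{z\in\mathbb{C}:\operatorname{Im}z\le0\}\setminus\{-\mu_0^{-2},\ldots,-\mu_d^{-2}\}$, $\omega=1+i$, and use the branch $\sqrt{re^{i\theta}}=\sqrt re^{i\theta/2}$ for $r\ge0$, $\theta\in[-\pi,0]$ (so $\sqrt{-1}=-i$). (a) For every $z\in S_-$ the limit $I(z):=\lim_{B\to+\infty}\int_0^B\prod_{j=0}^d\Phi(\mu_j\sqrt z\,\omega y)e^{-\omega^2y^2/2}\omega\,dy$ exists and is finite, and for every $A>0$ it equals \begin{align*} &\int_0^A\prod_{j}\Phi(\mu_j\sqrt z\,\omega y)e^{-\omega^2y^2/2}\omega\,dy+\frac{1}{A\omega}\prod_j\Phi(\mu_j\sqrt z\,\omega A)e^{-\omega^2A^2/2} -\frac{1}{2\omega}\int_{A^2}^\infty\prod_j\Phi(\mu_j\sqrt z\,\omega\sqrt x)\frac{e^{-\omega^2x/2}}{x^{3/2}}dx\\ &+\sum_{\ell=0}^d\frac{\mu_\ell\sqrt z}{\sqrt{2\pi}\omega^2(1+\mu_\ell^2z)}\prod_{j\ne\ell}\Phi(\mu_j\sqrt z\,\omega A)\frac{1}{A^2}e^{-\frac{\omega^2A^2}{2}(1+\mu_\ell^2z)} -\sum_{\ell=0}^d\frac{\mu_\ell\sqrt z}{\sqrt{2\pi}\omega^2(1+\mu_\ell^2z)}\int_{A^2}^\infty\prod_{j\ne\ell}\Phi(\mu_j\sqrt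 z\,\omega\sqrt x)\frac{1}{x^2}e^{-\frac{\omega^2x}{2}(1+\mu_\ell^2z)}dx\\ &+\sum_{0\le\ell_1\ne\ell_2\le d}\frac{\mu_{\ell_1}\mu_{\ell_2}z}{4\pi\omega(1+\mu_{\ell_1}^2z)}\int_{A^2}^\infty\prod_{j\notin\{\ell_1,\ell_2\}}\Phi(\mu_j\sqrt z\,\omega\sqrt x)\frac{1}{x^{3/2}}e^{-\frac{\omega^2x}{2}(1+\mu_{\ell_1}^2z+\mu_{\ell_2}^2z)}dx, \end{align*} with all integrals over $[A^2,\infty)$ absolutely convergent. (b) $z\mapsto I(z)$ is continuous on $S_-$ and analytic on the open lower half-plane $\{\operatorname{Im}z<0\}$.
   Context: $\Phi(z)=\frac12+\frac{1}{\sqrt{2\pi}}\int_0^ze^{-x^2/2}dx$ for $z\in\mathbb{C}$. Products over $j$ range over $j\in\{0,\ldots,d\}$ (minus excluded indices); $\sqrt x>0$ for $x>0$. *)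

theory Defs
  imports "HOL-Complex_Analysis.Complex_Analysis"
begin

definition Phi :: "complex \<Rightarrow> complex" where
  "Phi z = 1/2 + (1 / complex_of_real (sqrt (2*pi))) *
           contour_integral (linepath 0 z) (\<lambda>x. exp (- (x^2) / 2))"

text \<open>Branch of the square root: sqrt(r e^{i theta}) = sqrt r e^{i theta/2} with theta in [-pi,0]
  (relevant on the closed lower half-plane; the argument pi of the negative reals is replaced by -pi).\<close>
definition argm :: "complex \<Rightarrow> real" where
  "argm z = (if Arg z = pi then - pi else Arg z)"

definition sqrtm :: "complex \<Rightarrow> complex" where
  "sqrtm z = complex_of_real (sqrt (cmod z)) * exp (\<i> * complex_of_real (argm z / 2))"

definition omega :: complex where "omega = 1 + \<i>"

definition PPhi :: "(nat \<Rightarrow> real) \<Rightarrow> nat \<Rightarrow> nat set \<Rightarrow> complex \<Rightarrow> complex \<Rightarrow> complex" where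
  "PPhi mu d E z w = (\<Prod>j\<in>{0..d} - E. Phi (complex_of_real (mu j) * sqrtm z * omega * w))"

definition Fint :: "(nat \<Rightarrow> real) \<Rightarrow> nat \<Rightarrow> complex \<Rightarrow> real \<Rightarrow> complex" where
  "Fint mu d z y = PPhi mu d {} z (complex_of_real y) * exp (- (omega^2 * (complex_of_real y)^2) / 2) * omega"

definition Ilim :: "(nat \<Rightarrow> real) \<Rightarrow> nat \<Rightarrow> complex \<Rightarrow> complex" where
  "Ilim mu d z = Lim at_top (\<lambda>B. integral {0..B} (Fint mu d z))"

definition Sminus :: "(nat \<Rightarrow> real) \<Rightarrow> nat \<Rightarrow> complex set" where
  "Sminus mu d = {z. Im z \<le> 0} - {complex_of_real (- 1 / (mu j)^2) | j. j \<in> {0..d}}"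

end

(* Let H(w) be the sum of the boundary terms of the formula, viewed as a function of a complex
   variable w.  Differentiating the products of Phi factors, the terms coming from the leading
   boundary term cancel against those of the first-order terms, and one finds
     H'(w) = - F(w) - 2 w R(w),
   where F is the integrand, g is the combination of the three families of tail integrands
   appearing in the formula, and R(y) = g(y^2).
   Hence  integral_A^B F = H(A) - H(B) - integral_{A^2}^{B^2} g.
   For Im z <= 0 every argument w = mu_j sqrt(z) omega y of Phi has Re(w^2) >= 0; in that double
   sector the Gaussian primitive is bounded, so |Phi w| <= 3, and all exponential factors have
   modulus at most 1.  Therefore |H(B)| and |integral_{B^2}^oo g| are at most C(z)/B, with C
   continuous on S_-.  This gives (a), and also locally uniform convergence of the partial
   integrals; these are entire functions of sqrt(z), hence continuous on the closed and
   holomorphic on the open lower half-plane, which gives (b). *)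

theory Submission
  imports Defs
begin

lemma fourth_quadrant_square_root_unique:
  fixes v w :: complex
  assumes "v^2 = w^2" "Re v \<ge> 0" "Im v \<le> 0" "Re w \<ge> 0" "Im w \<le> 0"
  shows "v = w"
proof -
  have "(v - w) * (v + w) = 0" using assms(1) by (simp add: algebra_simps power2_eq_square)
  then have "v = w \<or> v = - w" by (simp add: eq_neg_iff_add_eq_0)
  then show ?thesis
  proof
    assume "v = - w"
    then have "Re v = 0" "Im v = 0" "Re w = 0" "Im w = 0" using assms by auto
    then show ?thesis by (simp add: complex_eq_iff)
  qed
qed

lemma cball_subset_lower_halfplane:
  assumes "Im z0 < 0"
  shows "cball z0 (- Im z0 / 2) \<subseteq> {z. Im z < 0}"
proof
  fix z
  assume "z \<in> cball z0 (- Im z0 / 2)"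
  then have "\<bar>Im (z0 - z)\<bar> \<le> - Im z0 / 2"
    using abs_Im_le_cmod[of "z0 - z"] by (auto simp: dist_norm)
  then show "z \<in> {z. Im z < 0}"
    using assms by auto
qed

lemma absolutely_integrable_on_atLeast_powr_bound:
  fixes f :: "real \<Rightarrow> 'a::euclidean_space"
  assumes "a > 0" "e < -1" "continuous_on {a..} f" "\<And>x. x \<ge> a \<Longrightarrow> norm (f x) \<le> C * x powr e"
  shows "f absolutely_integrable_on {a..}"
proof (rule measurable_bounded_by_integrable_imp_absolutely_integrable)
  show "f \<in> borel_measurable (lebesgue_on {a..})"
    using assms(3) by (rule continuous_imp_measurable_on_sets_lebesgue) auto
  show "(\<lambda>x. C * x powr e) integrable_on {a..}"
    using has_integral_mult_right[OF has_integral_powr_to_inf[OF assms(2,1)]] by blast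
qed (use assms(4) in auto)

lemma norm_integral_atLeast_powr_bound:
  fixes f :: "real \<Rightarrow> 'a::euclidean_space"
  assumes "a > 0" "e < -1" "continuous_on {a..} f" "\<And>x. x \<ge> a \<Longrightarrow> norm (f x) \<le> C * x powr e"
  shows "norm (integral {a..} f) \<le> C * (- (a powr (e+1)) / (e+1))"
proof -
  have bound: "((\<lambda>x. C * x powr e) has_integral C * (- (a powr (e+1)) / (e+1))) {a..}"
    using has_integral_powr_to_inf[OF assms(2,1)] by (rule has_integral_mult_right)
  have "norm (integral {a..} f) \<le> integral {a..} (\<lambda>x. C * x powr e)"
    using absolutely_integrable_on_atLeast_powr_bound[OF assms] bound assms(4)
    by (intro integral_norm_bound_integral) (auto dest: set_lebesgue_integral_eq_integral(1))
  then show ?thesis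
    using integral_unique[OF bound] by simp
qed

lemma integral_atLeastAtMost_eq_diff:
  fixes f :: "real \<Rightarrow> 'a::banach"
  assumes "f integrable_on {a..}" "f integrable_on {b..}" "a \<le> b"
  shows "integral {a..b} f = integral {a..} f - integral {b..} f"
proof -
  have "f integrable_on {a..b}"
    using assms(1) by (rule integrable_on_subinterval) auto
  moreover have "{a..b} \<union> {b..} = {a..}" "{a..b} \<inter> {b..} = {b}"
    using assms(3) by auto
  ultimately have "integral {a..} f = integral {a..b} f + integral {b..} f"
    using integral_Un[OF _ assms(2), of "{a..b}"] by (metis negligible_sing)
  then show ?thesis
    by simp
qed

section \<open>The constant \<open>omega\<close> and the branch \<open>sqrtm\<close>\<close>

lemma omega_squared: "omega^2 = 2 * \<i>"
  unfolding omega_def by (simp add: power2_eq_square algebra_simps)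

lemma omega_nonzero: "omega \<noteq> 0"
  unfolding omega_def by (simp add: complex_eq_iff)

lemma norm_omega: "norm omega = sqrt 2"
  unfolding omega_def by (simp add: cmod_def)

lemma exp_i_argm: "exp (\<i> * complex_of_real (argm z)) = exp (\<i> * complex_of_real (Arg z))"
  unfolding argm_def by (simp add: exp_minus)

lemma argm_bounds:
  assumes "Im z \<le> 0"
  shows "- pi \<le> argm z" "argm z \<le> 0"
proof -
  have "Arg z \<le> 0 \<or> Arg z = pi"
    using Arg_pos_iff[of z] Arg_eq_pi[of z] assms by force
  then show "argm z \<le> 0" unfolding argm_def by auto
  show "- pi \<le> argm z" unfolding argm_def using mpi_less_Arg[of z] by auto
qed

lemma sqrtm_squared: "(sqrtm z)^2 = z"
proof -
  have "(sqrtm z)^2 = complex_of_real (cmod z) * exp (\<i> * complex_of_real (argm z))"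
    unfolding sqrtm_def
    by (simp add: power_mult_distrib exp_double[symmetric] flip: exp_of_nat_mult of_real_power)
  also have "\<dots> = z"
    using exp_i_argm[of z] Arg_eq[of z] by (cases "z = 0") auto
  finally show ?thesis .
qed

lemma sqrtm_fourth_quadrant:
  assumes "Im z \<le> 0"
  shows "Re (sqrtm z) \<ge> 0" "Im (sqrtm z) \<le> 0"
proof -
  note bounds = argm_bounds[OF assms]
  have "cos (argm z / 2) \<ge> 0" using bounds by (intro cos_ge_zero) auto
  then show "Re (sqrtm z) \<ge> 0" unfolding sqrtm_def by (simp add: Re_exp)
  have "sin (argm z / 2) \<le> 0" using bounds sin_ge_zero[of "- (argm z / 2)"] by simp
  then show "Im (sqrtm z) \<le> 0" unfolding sqrtm_def by (simp add: Im_exp mult_nonneg_nonpos)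
qed

lemma sqrtm_eq_csqrt:
  assumes "Im z \<le> 0"
  shows "sqrtm z = csqrt (\<i> * z) * (1 - \<i>) / complex_of_real (sqrt 2)"
proof (rule fourth_quadrant_square_root_unique)
  define c where "c = csqrt (\<i> * z)"
  have "Re (c^2) = Re c ^2 - Im c ^2" by (simp add: power2_eq_square)
  moreover have "Re (c^2) \<ge> 0" using assms by (simp add: c_def)
  moreover have "Re c \<ge> 0" unfolding c_def by (rule Re_csqrt)
  ultimately have "\<bar>Im c\<bar> \<le> Re c"
    by (metis abs_le_square_iff abs_of_nonneg diff_ge_0_iff_ge)
  then show "Re (c * (1 - \<i>) / complex_of_real (sqrt 2)) \<ge> 0"
    "Im (c * (1 - \<i>) / complex_of_real (sqrt 2)) \<le> 0"
    by (simp_all add: Re_divide_of_real Im_divide_of_real divide_nonpos_pos)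
  have "(complex_of_real (sqrt 2))^2 = 2"
    by (metis of_real_numeral of_real_power real_sqrt_pow2 zero_le_numeral)
  moreover have "c^2 = \<i> * z" unfolding c_def by simp
  ultimately show "(sqrtm z)^2 = (c * (1 - \<i>) / complex_of_real (sqrt 2))^2"
    unfolding sqrtm_squared
    by (simp add: power_divide power_mult_distrib power2_eq_square algebra_simps)
qed (use sqrtm_fourth_quadrant[OF assms] in auto)

lemma continuous_on_sqrtm: "continuous_on {z. Im z \<le> 0} sqrtm"
proof -
  have "isCont csqrt (\<i> * z)" if "Im z \<le> 0" for z
  proof (cases "z = 0")
    case True
    have "((\<lambda>w. norm (csqrt w)) \<longlongrightarrow> 0) (at 0)"
      using tendsto_real_sqrt[OF tendsto_norm[OF tendsto_ident_at, of 0 UNIV]] by simp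
    then show ?thesis
      using True tendsto_norm_zero_cancel unfolding isCont_def by fastforce
  next
    case False
    then have "\<i> * z \<notin> \<real>\<^sub>\<le>\<^sub>0"
      using that by (auto simp: complex_nonpos_Reals_iff complex_eq_iff)
    then show ?thesis by (rule continuous_at_csqrt)
  qed
  then have "isCont (\<lambda>z. csqrt (\<i> * z)) z" if "Im z \<le> 0" for z
    using that by (intro isCont_o2[where f="\<lambda>z. \<i> * z" and g=csqrt]) auto
  then have "continuous_on {z. Im z \<le> 0} (\<lambda>z. csqrt (\<i> * z))"
    by (intro continuous_at_imp_continuous_on) auto
  then have "continuous_on {z. Im z \<le> 0} (\<lambda>z. csqrt (\<i> * z) * (1 - \<i>) / complex_of_real (sqrt 2))"
    by (intro continuous_intros) auto
  then show ?thesis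
    by (rule continuous_on_eq) (simp add: sqrtm_eq_csqrt)
qed

lemma holomorphic_on_sqrtm: "sqrtm holomorphic_on {z. Im z < 0}"
proof -
  have "(\<lambda>z. csqrt (\<i> * z) * (1 - \<i>) / complex_of_real (sqrt 2)) holomorphic_on {z. Im z < 0}"
    by (intro holomorphic_intros holomorphic_on_compose_gen[unfolded o_def, where g=csqrt,
          OF _ holomorphic_on_csqrt]) (auto simp: complex_nonpos_Reals_iff)
  then show ?thesis
    by (rule holomorphic_transform) (simp add: sqrtm_eq_csqrt)
qed

section \<open>The normal distribution function on the complex plane\<close>

definition phi :: "complex \<Rightarrow> complex" where
  "phi w = exp (- (w^2) / 2) / complex_of_real (sqrt (2*pi))"

lemma has_field_derivative_Phi: "(Phi has_field_derivative phi w) (at w)"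
proof -
  obtain G :: "complex \<Rightarrow> complex"
    where G: "\<And>x. (G has_field_derivative exp (- (x^2) / 2)) (at x)"
    by (rule holomorphic_convex_primitive'[of UNIV "\<lambda>x. exp (- (x^2) / 2)"])
       (auto intro!: holomorphic_intros)
  have "contour_integral (linepath 0 v) (\<lambda>x. exp (- (x^2) / 2)) = G v - G 0" for v
    using contour_integral_primitive[of UNIV G "\<lambda>x. exp (- (x^2) / 2)" "linepath 0 v"] G
    by (intro contour_integral_unique) simp
  then have "Phi = (\<lambda>v. 1/2 + (1 / complex_of_real (sqrt (2*pi))) * (G v - G 0))"
    unfolding Phi_def by auto
  moreover have "((\<lambda>v. 1/2 + (1 / complex_of_real (sqrt (2*pi))) * (G v - G 0)) has_field_derivative
      (1 / complex_of_real (sqrt (2*pi))) * exp (- (w^2) / 2)) (at w)"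
    by (auto intro!: derivative_eq_intros G)
  ultimately show ?thesis
    unfolding phi_def by simp
qed

lemma has_field_derivative_phi: "(phi has_field_derivative - w * phi w) (at w)"
  unfolding phi_def[abs_def] by (auto intro!: derivative_eq_intros simp: power2_eq_square)

lemma Phi_0: "Phi 0 = 1/2"
  unfolding Phi_def by simp

lemma continuous_on_Phi [continuous_intros]:
  "continuous_on S f \<Longrightarrow> continuous_on S (\<lambda>x. Phi (f x))"
  by (rule continuous_on_compose2[of UNIV Phi])
     (auto intro: continuous_at_imp_continuous_on DERIV_isCont has_field_derivative_Phi)

lemma continuous_on_phi [continuous_intros]:
  "continuous_on S f \<Longrightarrow> continuous_on S (\<lambda>x. phi (f x))"
  unfolding phi_def by (intro continuous_intros) auto

lemma norm_phi_le:
  assumes "Re (w^2) \<ge> 0"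
  shows "norm (phi w) \<le> 1 / sqrt (2*pi)"
  using assms unfolding phi_def by (simp add: norm_divide divide_right_mono)

lemma norm_Phi_ray_diff_le:
  assumes u: "Re (u^2) \<ge> 0" and "0 \<le> a" "a \<le> b"
  shows "norm (Phi (complex_of_real b * u) - Phi (complex_of_real a * u)) \<le> (b - a) * norm u / sqrt (2*pi)"
proof -
  have "Re (w^2) \<ge> 0" if w: "w \<in> closed_segment (complex_of_real a * u) (complex_of_real b * u)" for w
  proof -
    obtain s where "w = (1 - s) *\<^sub>R (complex_of_real a * u) + s *\<^sub>R (complex_of_real b * u)"
      using w unfolding closed_segment_def by blast
    then have "w = complex_of_real ((1 - s) * a + s * b) * u"
      by (simp add: scaleR_conv_of_real algebra_simps)
    then show ?thesis using u by (simp add: power_mult_distrib)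
  qed
  then have "norm (Phi (complex_of_real b * u) - Phi (complex_of_real a * u))
      \<le> 1 / sqrt (2*pi) * norm (complex_of_real b * u - complex_of_real a * u)"
    by (intro field_differentiable_bound[OF convex_closed_segment, where f'=phi] norm_phi_le
          has_field_derivative_at_within[OF has_field_derivative_Phi]) auto
  also have "\<dots> = (b - a) * norm u / sqrt (2*pi)"
    using assms by (simp flip: left_diff_distrib of_real_diff add: norm_mult)
  finally show ?thesis .
qed

lemma has_field_derivative_Phi_plus_phi_div:
  assumes "w \<noteq> 0"
  shows "((\<lambda>w. Phi w + phi w / w) has_field_derivative - phi w / w^2) (at w)"
  using DERIV_add[OF has_field_derivative_Phi DERIV_divide[OF has_field_derivative_phi DERIV_ident assms]]
  using assms by (simp add: field_simps power2_eq_square)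

lemma has_vector_derivative_Phi_plus_phi_div_ray:
  assumes "t > 0" "u \<noteq> 0"
  shows "((\<lambda>t. Phi (complex_of_real t * u) + phi (complex_of_real t * u) / (complex_of_real t * u))
      has_vector_derivative - phi (complex_of_real t * u) / (complex_of_real t ^2 * u)) (at t)"
proof -
  have "((\<lambda>x. Phi (x * u) + phi (x * u) / (x * u)) has_field_derivative
      - phi (complex_of_real t * u) / (complex_of_real t * u)^2 * u) (at (complex_of_real t))"
    using assms
    by (intro DERIV_chain2[OF has_field_derivative_Phi_plus_phi_div]) (auto intro!: derivative_eq_intros)
  then have "((\<lambda>x. Phi (x * u) + phi (x * u) / (x * u)) has_field_derivative
      - phi (complex_of_real t * u) / (complex_of_real t ^2 * u)) (at (complex_of_real t))"
    using assms by (simp add: power2_eq_square field_simps)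
  from has_vector_derivative_real_field[OF this] show ?thesis
    by simp
qed

lemma norm_phi_div_ray_le:
  assumes "Re (u^2) \<ge> 0" "norm u = 1" "t \<ge> 1"
  shows "norm (phi (complex_of_real t * u) / (complex_of_real t * u)) \<le> 1 / sqrt (2*pi)"
proof -
  have "norm (phi (complex_of_real t * u) / (complex_of_real t * u)) = norm (phi (complex_of_real t * u)) / t"
    using assms by (simp add: norm_divide norm_mult)
  also have "\<dots> \<le> norm (phi (complex_of_real t * u))"
    using assms(3) by (simp add: divide_le_eq mult_le_cancel_left1)
  also have "\<dots> \<le> 1 / sqrt (2*pi)"
    using assms(1) by (intro norm_phi_le) (simp add: power_mult_distrib)
  finally show ?thesis .
qed

text \<open>Far out on the ray, \<open>Phi w + phi w / w\<close> has the integrable derivative \<open>- phi w / w\<^sup>2\<close>.\<close>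
lemma norm_Phi_plus_phi_div_ray_diff_le:
  assumes u: "Re (u^2) \<ge> 0" "norm u = 1" and ab: "1 \<le> a" "a < b"
  defines "k \<equiv> \<lambda>t. Phi (complex_of_real t * u) + phi (complex_of_real t * u) / (complex_of_real t * u)"
  shows "norm (k b - k a) \<le> 1 / (sqrt (2*pi) * a) - 1 / (sqrt (2*pi) * b)"
proof -
  have "u \<noteq> 0"
    using u(2) by auto
  then have k': "(k has_vector_derivative - phi (complex_of_real t * u) / (complex_of_real t ^2 * u)) (at t)"
    if "t > 0" for t
    unfolding k_def by (rule has_vector_derivative_Phi_plus_phi_div_ray[OF that])
  have "norm (k b - k a) \<le> (- 1 / (sqrt (2*pi) * b)) - (- 1 / (sqrt (2*pi) * a))"
  proof (rule differentiable_bound_general[OF ab(2)])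
    show "continuous_on {a..b} k"
      using ab(1) by (intro continuous_at_imp_continuous_on ballI has_vector_derivative_continuous[OF k']) auto
    show "continuous_on {a..b} (\<lambda>t. - 1 / (sqrt (2*pi) * t))"
      using ab(1) by (intro continuous_intros) auto
    show "((\<lambda>t. - 1 / (sqrt (2*pi) * t)) has_vector_derivative 1 / (sqrt (2*pi) * x^2)) (at x)"
      if "a < x" for x
      using that ab(1) by (auto intro!: derivative_eq_intros simp: power2_eq_square
          simp flip: has_real_derivative_iff_has_vector_derivative)
    show "norm (- phi (complex_of_real x * u) / (complex_of_real x ^2 * u)) \<le> 1 / (sqrt (2*pi) * x^2)"
      if "a < x" for x
    proof -
      have "norm (- phi (complex_of_real x * u) / (complex_of_real x ^2 * u))
          = norm (phi (complex_of_real x * u)) / x^2"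
        using u(2) by (simp add: norm_divide norm_mult norm_power)
      also have "\<dots> \<le> (1 / sqrt (2*pi)) / x^2"
        using u(1) by (intro divide_right_mono norm_phi_le) (auto simp: power_mult_distrib)
      finally show ?thesis by simp
    qed
  qed (use k' ab(1) in auto)
  then show ?thesis
    by simp
qed

lemma norm_Phi_ray_far_diff_le:
  assumes u: "Re (u^2) \<ge> 0" "norm u = 1" and ab: "1 \<le> a" "a \<le> b"
  shows "norm (Phi (complex_of_real b * u) - Phi (complex_of_real a * u)) \<le> 3 / sqrt (2*pi)"
proof (cases "a = b")
  case False
  define k where "k t = Phi (complex_of_real t * u) + phi (complex_of_real t * u) / (complex_of_real t * u)" for t
  have "norm (k b - k a) \<le> 1 / (sqrt (2*pi) * a) - 1 / (sqrt (2*pi) * b)"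
    using norm_Phi_plus_phi_div_ray_diff_le[OF u ab(1)] False ab(2) unfolding k_def by simp
  moreover have "1 / (sqrt (2*pi) * a) \<le> 1 / sqrt (2*pi)"
    using ab(1) by (intro divide_left_mono) auto
  moreover have "0 \<le> 1 / (sqrt (2*pi) * b)"
    using ab by (intro divide_nonneg_pos) auto
  ultimately have "norm (k b - k a) \<le> 1 / sqrt (2*pi)"
    by linarith
  then have "norm ((k b - k a) - phi (complex_of_real b * u) / (complex_of_real b * u)
      + phi (complex_of_real a * u) / (complex_of_real a * u)) \<le> 1 / sqrt (2*pi) + 1 / sqrt (2*pi) + 1 / sqrt (2*pi)"
    using ab norm_phi_div_ray_le[OF u]
    by (intro order_trans[OF norm_triangle_ineq add_mono[OF order_trans[OF norm_triangle_ineq4 add_mono]]]) auto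
  then show ?thesis
    unfolding k_def by simp
qed simp

lemma norm_Phi_le:
  assumes "Re (w^2) \<ge> 0"
  shows "norm (Phi w) \<le> 3"
proof -
  define r where "r = norm w"
  define u where "u = (if w = 0 then 1 else w / complex_of_real r)"
  have u: "norm u = 1" "w = complex_of_real r * u"
    unfolding u_def r_def by (auto simp: norm_divide)
  have re: "Re (u^2) \<ge> 0"
  proof (cases "w = 0")
    case False
    then have "Re (u^2) = Re (w^2) / r^2"
      unfolding u_def by (simp add: power_divide Re_divide_of_real)
    then show ?thesis using assms by simp
  qed (simp add: u_def)
  have "norm (Phi (complex_of_real (min r 1) * u) - Phi 0) \<le> min r 1 / sqrt (2*pi)"
    using norm_Phi_ray_diff_le[OF re, of 0 "min r 1"] u(1) by (simp add: r_def)
  also have "\<dots> \<le> 1 / sqrt (2*pi)"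
    by (intro divide_right_mono) auto
  finally have near: "norm (Phi (complex_of_real (min r 1) * u) - Phi 0) \<le> 1 / sqrt (2*pi)" .
  have far: "norm (Phi w - Phi (complex_of_real (min r 1) * u)) \<le> 3 / sqrt (2*pi)"
  proof (cases "r \<le> 1")
    case False
    then show ?thesis using norm_Phi_ray_far_diff_le[OF re u(1), of 1 r] u(2) by simp
  qed (use u(2) in simp)
  have "norm (Phi w) \<le> norm (Phi 0) + norm (Phi (complex_of_real (min r 1) * u) - Phi 0)
      + norm (Phi w - Phi (complex_of_real (min r 1) * u))"
    by (smt (verit) norm_triangle_ineq4 norm_triangle_sub)
  also have "\<dots> \<le> 1/2 + 4 / sqrt (2*pi)"
    using near far by (simp add: Phi_0)
  also have "\<dots> \<le> 3"
  proof -
    have "2 \<le> sqrt (2*pi)" using pi_gt3 by (simp add: real_le_rsqrt)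
    then have "4 / sqrt (2*pi) \<le> 4 / 2" by (intro divide_left_mono) auto
    then show ?thesis by simp
  qed
  finally show ?thesis .
qed

definition alpha :: "(nat \<Rightarrow> real) \<Rightarrow> complex \<Rightarrow> nat \<Rightarrow> complex" where
  "alpha mu z j = complex_of_real (mu j) * sqrtm z * omega"

lemma alpha_squared: "(alpha mu z j)^2 = complex_of_real ((mu j)^2) * z * omega^2"
  unfolding alpha_def by (simp add: power_mult_distrib sqrtm_squared)

lemma has_field_derivative_PPhi:
  "(PPhi mu d E z has_field_derivative
     (\<Sum>l\<in>{0..d} - E. alpha mu z l * phi (alpha mu z l * w) * PPhi mu d (insert l E) z w)) (at w)"
proof -
  have "((\<lambda>u. \<Prod>j\<in>{0..d} - E. Phi (alpha mu z j * u)) has_field_derivative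
     (\<Sum>l\<in>{0..d} - E. phi (alpha mu z l * w) * alpha mu z l * (\<Prod>j\<in>{0..d} - E - {l}. Phi (alpha mu z j * w))))
     (at w)"
    by (intro has_field_derivative_prod DERIV_chain2[OF has_field_derivative_Phi])
       (auto intro!: derivative_eq_intros)
  moreover have "{0..d} - E - {l} = {0..d} - insert l E" for l by auto
  ultimately show ?thesis unfolding PPhi_def alpha_def by (simp add: mult_ac)
qed

lemma continuous_on_PPhi [continuous_intros]:
  "continuous_on S f \<Longrightarrow> continuous_on S (\<lambda>x. PPhi mu d E z (f x))"
  by (rule continuous_on_compose2[of UNIV "PPhi mu d E z"])
     (auto intro: continuous_at_imp_continuous_on DERIV_isCont has_field_derivative_PPhi)

lemma norm_PPhi_le:
  assumes "Im z \<le> 0"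
  shows "norm (PPhi mu d E z (complex_of_real t)) \<le> 3^(d+1)"
proof -
  have "norm (PPhi mu d E z (complex_of_real t)) = (\<Prod>j\<in>{0..d} - E. norm (Phi (alpha mu z j * complex_of_real t)))"
    unfolding PPhi_def alpha_def by (simp add: prod_norm)
  also have "\<dots> \<le> (\<Prod>j\<in>{0..d} - E. 3)"
  proof (intro prod_mono conjI norm_ge_zero norm_Phi_le)
    fix j
    have "Re ((alpha mu z j * complex_of_real t)^2) = - 2 * ((mu j)^2 * t^2) * Im z"
      by (simp add: power_mult_distrib alpha_squared omega_squared)
    then show "0 \<le> Re ((alpha mu z j * complex_of_real t)^2)"
      using assms by (simp add: mult_nonneg_nonpos2)
  qed
  also have "\<dots> = 3 ^ card ({0..d} - E)"
    by simp
  also have "\<dots> \<le> 3 ^ (d+1)"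
    using card_mono[of "{0..d}" "{0..d} - E"] by (intro power_increasing) auto
  finally show ?thesis .
qed

section \<open>An antiderivative of the integrand\<close>

definition decay :: "complex \<Rightarrow> complex \<Rightarrow> complex" where
  "decay c w = exp (- (omega^2 * w^2 / 2) * c)"

definition rate1 :: "(nat \<Rightarrow> real) \<Rightarrow> complex \<Rightarrow> nat \<Rightarrow> complex" where
  "rate1 mu z l = 1 + complex_of_real ((mu l)^2) * z"

definition rate2 :: "(nat \<Rightarrow> real) \<Rightarrow> complex \<Rightarrow> nat \<Rightarrow> nat \<Rightarrow> complex" where
  "rate2 mu z l m = 1 + complex_of_real ((mu l)^2) * z + complex_of_real ((mu m)^2) * z"

definition kappa1 :: "(nat \<Rightarrow> real) \<Rightarrow> complex \<Rightarrow> nat \<Rightarrow> complex" where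
  "kappa1 mu z l = complex_of_real (mu l) * sqrtm z /
     (complex_of_real (sqrt (2*pi)) * omega^2 * rate1 mu z l)"

definition kappa2 :: "(nat \<Rightarrow> real) \<Rightarrow> complex \<Rightarrow> nat \<Rightarrow> nat \<Rightarrow> complex" where
  "kappa2 mu z l m = complex_of_real (mu l * mu m) * z /
     (complex_of_real (4 * pi) * omega * rate1 mu z l)"

definition index_pairs :: "nat \<Rightarrow> (nat \<times> nat) set" where
  "index_pairs d = {(a, b). a \<in> {0..d} \<and> b \<in> {0..d} \<and> a \<noteq> b}"

lemma index_pairs_Sigma: "index_pairs d = Sigma {0..d} (\<lambda>l. {0..d} - {l})"
  unfolding index_pairs_def by auto

lemma finite_index_pairs: "finite (index_pairs d)"
  unfolding index_pairs_Sigma by auto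

lemma kappa1_mult_alpha:
  assumes "rate1 mu z l \<noteq> 0"
  shows "kappa1 mu z l * alpha mu z m = 2 * complex_of_real (sqrt (2*pi)) * kappa2 mu z l m"
proof -
  define q where "q = sqrtm z"
  define s where "s = complex_of_real (sqrt (2*pi))"
  define r where "r = rate1 mu z l"
  have z: "z = q * q"
    using sqrtm_squared[of z] by (simp add: q_def power2_eq_square)
  have "complex_of_real (4 * pi) = complex_of_real (2 * (sqrt (2*pi) * sqrt (2*pi)))"
    by simp
  then have pi: "complex_of_real (4 * pi) = 2 * s * s"
    unfolding s_def by (simp only: of_real_mult of_real_numeral mult.assoc)
  have "s \<noteq> 0" "r \<noteq> 0"
    using assms by (auto simp: s_def r_def)
  then show ?thesis
    unfolding kappa1_def kappa2_def alpha_def q_def[symmetric] s_def[symmetric] r_def[symmetric] pi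
    unfolding z using omega_nonzero by (simp add: field_simps power2_eq_square)
qed

lemma has_field_derivative_decay: "(decay c has_field_derivative - (omega^2 * w * c) * decay c w) (at w)"
  unfolding decay_def[abs_def] by (auto intro!: derivative_eq_intros simp: power2_eq_square)

lemma phi_alpha_mult_exp:
  "phi (alpha mu z l * w) * exp (- (omega^2 * w^2) / 2)
     = decay (rate1 mu z l) w / complex_of_real (sqrt (2*pi))"
  unfolding phi_def decay_def rate1_def power_mult_distrib alpha_squared
  by (simp add: mult_exp_exp algebra_simps add_divide_distrib diff_divide_distrib)

lemma phi_alpha_mult_decay:
  "phi (alpha mu z m * w) * decay (rate1 mu z l) w
     = decay (rate2 mu z l m) w / complex_of_real (sqrt (2*pi))"
  unfolding phi_def decay_def rate1_def rate2_def power_mult_distrib alpha_squared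
  by (simp add: mult_exp_exp algebra_simps add_divide_distrib diff_divide_distrib)

definition boundary_terms :: "(nat \<Rightarrow> real) \<Rightarrow> nat \<Rightarrow> complex \<Rightarrow> complex \<Rightarrow> complex" where
  "boundary_terms mu d z w = 1 / (w * omega) * PPhi mu d {} z w * exp (- (omega^2 * w^2) / 2)
     + (\<Sum>l\<in>{0..d}. kappa1 mu z l * PPhi mu d {l} z w * (1 / w^2) * decay (rate1 mu z l) w)"

definition remainder_terms :: "(nat \<Rightarrow> real) \<Rightarrow> nat \<Rightarrow> complex \<Rightarrow> complex \<Rightarrow> complex" where
  "remainder_terms mu d z w = 1 / (2 * omega) * (PPhi mu d {} z w * exp (- (omega^2 * w^2) / 2) / w^3)
     + (\<Sum>l\<in>{0..d}. kappa1 mu z l * PPhi mu d {l} z w * (1 / w^4) * decay (rate1 mu z l) w)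
     - (\<Sum>(l, m)\<in>index_pairs d.
          kappa2 mu z l m * PPhi mu d {l, m} z w * (1 / w^3) * decay (rate2 mu z l m) w)"

lemma has_field_derivative_leading_boundary_term:
  assumes w: "w \<noteq> 0"
  shows "((\<lambda>w. 1 / (w * omega) * PPhi mu d {} z w * exp (- (omega^2 * w^2) / 2)) has_field_derivative
     - (PPhi mu d {} z w * exp (- (omega^2 * w^2) / 2) * omega)
     - 2 * w * (1 / (2 * omega) * (PPhi mu d {} z w * exp (- (omega^2 * w^2) / 2) / w^3))
     + (\<Sum>l\<in>{0..d}. complex_of_real (mu l) * sqrtm z / (complex_of_real (sqrt (2*pi)) * w)
          * PPhi mu d {l} z w * decay (rate1 mu z l) w)) (at w)"
proof -
  define P where "P = PPhi mu d {} z w"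
  define P' where "P' = (\<Sum>l\<in>{0..d} - {}. alpha mu z l * phi (alpha mu z l * w) * PPhi mu d (insert l {}) z w)"
  define E where "E = exp (- (omega^2 * w^2) / 2)"
  have "((\<lambda>w. 1 / (w * omega) * PPhi mu d {} z w * exp (- (omega^2 * w^2) / 2)) has_field_derivative
      (- 1 / (w^2 * omega)) * P * E + 1 / (w * omega) * P' * E + 1 / (w * omega) * P * (E * (- (omega^2 * w))))
      (at w)"
    unfolding P_def P'_def E_def using w omega_nonzero
    by (auto intro!: derivative_eq_intros has_field_derivative_PPhi simp: field_simps power2_eq_square)
  moreover have "1 / (w * omega) * P' * E = (\<Sum>l\<in>{0..d}. complex_of_real (mu l) * sqrtm z
      / (complex_of_real (sqrt (2*pi)) * w) * PPhi mu d {l} z w * decay (rate1 mu z l) w)"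
    unfolding P'_def sum_distrib_left sum_distrib_right
  proof (rule sum.cong)
    fix l
    show "1 / (w * omega) * (alpha mu z l * phi (alpha mu z l * w) * PPhi mu d (insert l {}) z w) * E
      = complex_of_real (mu l) * sqrtm z / (complex_of_real (sqrt (2*pi)) * w) * PPhi mu d {l} z w
        * decay (rate1 mu z l) w"
      using phi_alpha_mult_exp[of mu z l w] w omega_nonzero unfolding E_def
      by (simp add: alpha_def field_simps)
  qed simp
  moreover have "(- 1 / (w^2 * omega)) * P * E = - 2 * w * (1 / (2 * omega) * (P * E / w^3))"
    using w omega_nonzero by (simp add: field_simps power2_eq_square power3_eq_cube)
  moreover have "1 / (w * omega) * P * (E * (- (omega^2 * w))) = - (P * E * omega)"
    using w omega_nonzero by (simp add: field_simps power2_eq_square)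
  ultimately show ?thesis
    unfolding P_def E_def by (simp add: algebra_simps)
qed

lemma has_field_derivative_first_order_boundary_term:
  assumes w: "w \<noteq> 0" and rate: "rate1 mu z l \<noteq> 0"
  shows "((\<lambda>w. kappa1 mu z l * PPhi mu d {l} z w * (1 / w^2) * decay (rate1 mu z l) w) has_field_derivative
     (\<Sum>m\<in>{0..d} - {l}. 2 * w * (kappa2 mu z l m * PPhi mu d {l, m} z w * (1 / w^3) * decay (rate2 mu z l m) w))
     - 2 * w * (kappa1 mu z l * PPhi mu d {l} z w * (1 / w^4) * decay (rate1 mu z l) w)
     - complex_of_real (mu l) * sqrtm z / (complex_of_real (sqrt (2*pi)) * w)
          * PPhi mu d {l} z w * decay (rate1 mu z l) w) (at w)"
proof -
  define Q where "Q = PPhi mu d {l} z w"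
  define Q' where "Q' = (\<Sum>m\<in>{0..d} - {l}. alpha mu z m * phi (alpha mu z m * w) * PPhi mu d (insert m {l}) z w)"
  define D where "D = decay (rate1 mu z l) w"
  define k where "k = kappa1 mu z l"
  have "((\<lambda>w. kappa1 mu z l * PPhi mu d {l} z w * (1 / w^2) * decay (rate1 mu z l) w) has_field_derivative
      k * Q' * (1 / w^2) * D + k * Q * (- 2 / w^3) * D
      + k * Q * (1 / w^2) * (- (omega^2 * w * rate1 mu z l) * D)) (at w)"
    unfolding Q_def Q'_def D_def k_def using w
    by (auto intro!: derivative_eq_intros has_field_derivative_PPhi has_field_derivative_decay
        simp: field_simps power2_eq_square power3_eq_cube)
  moreover have "k * Q' * (1 / w^2) * D = (\<Sum>m\<in>{0..d} - {l}.
      2 * w * (kappa2 mu z l m * PPhi mu d {l, m} z w * (1 / w^3) * decay (rate2 mu z l m) w))"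
    unfolding Q'_def sum_distrib_left sum_distrib_right
  proof (rule sum.cong)
    fix m
    have "k * (alpha mu z m * phi (alpha mu z m * w) * PPhi mu d (insert m {l}) z w) * (1 / w^2) * D
        = (k * alpha mu z m) * (phi (alpha mu z m * w) * D) * PPhi mu d {l, m} z w / w^2"
      by (simp add: insert_commute field_simps)
    also have "\<dots> = 2 * complex_of_real (sqrt (2*pi)) * kappa2 mu z l m
        * (decay (rate2 mu z l m) w / complex_of_real (sqrt (2*pi))) * PPhi mu d {l, m} z w / w^2"
      unfolding k_def D_def kappa1_mult_alpha[OF rate] phi_alpha_mult_decay ..
    also have "\<dots> = 2 * w * (kappa2 mu z l m * PPhi mu d {l, m} z w * (1 / w^3) * decay (rate2 mu z l m) w)"
      using w by (simp add: field_simps power2_eq_square power3_eq_cube)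
    finally show "k * (alpha mu z m * phi (alpha mu z m * w) * PPhi mu d (insert m {l}) z w) * (1 / w^2) * D
      = 2 * w * (kappa2 mu z l m * PPhi mu d {l, m} z w * (1 / w^3) * decay (rate2 mu z l m) w)" .
  qed simp
  moreover have "k * Q * (- 2 / w^3) * D = - 2 * w * (k * Q * (1 / w^4) * D)"
    using w by (simp add: field_simps power2_eq_square power3_eq_cube power4_eq_xxxx)
  moreover have "k * Q * (1 / w^2) * (- (omega^2 * w * rate1 mu z l) * D)
      = - (complex_of_real (mu l) * sqrtm z / (complex_of_real (sqrt (2*pi)) * w) * Q * D)"
    using w rate omega_nonzero unfolding k_def kappa1_def by (simp add: field_simps power2_eq_square)
  ultimately show ?thesis
    unfolding Q_def D_def k_def by (simp add: algebra_simps)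
qed

lemma has_field_derivative_boundary_terms:
  assumes w: "w \<noteq> 0" and rates: "\<forall>l\<in>{0..d}. rate1 mu z l \<noteq> 0"
  shows "(boundary_terms mu d z has_field_derivative
     - (PPhi mu d {} z w * exp (- (omega^2 * w^2) / 2) * omega) - 2 * w * remainder_terms mu d z w) (at w)"
proof -
  define F where "F = PPhi mu d {} z w * exp (- (omega^2 * w^2) / 2) * omega"
  define T where "T = 1 / (2 * omega) * (PPhi mu d {} z w * exp (- (omega^2 * w^2) / 2) / w^3)"
  define X where "X l = complex_of_real (mu l) * sqrtm z / (complex_of_real (sqrt (2*pi)) * w)
      * PPhi mu d {l} z w * decay (rate1 mu z l) w" for l
  define Y where "Y l m = kappa2 mu z l m * PPhi mu d {l, m} z w * (1 / w^3) * decay (rate2 mu z l m) w" for l m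
  define Z where "Z l = kappa1 mu z l * PPhi mu d {l} z w * (1 / w^4) * decay (rate1 mu z l) w" for l
  have deriv: "(boundary_terms mu d z has_field_derivative (- F - 2 * w * T + sum X {0..d})
      + (\<Sum>l\<in>{0..d}. (\<Sum>m\<in>{0..d} - {l}. 2 * w * Y l m) - 2 * w * Z l - X l)) (at w)"
    unfolding boundary_terms_def[abs_def] F_def T_def X_def Y_def Z_def using rates
    by (intro DERIV_add DERIV_sum has_field_derivative_leading_boundary_term[OF w]
        has_field_derivative_first_order_boundary_term[OF w]) auto
  have pairs: "(\<Sum>l\<in>{0..d}. \<Sum>m\<in>{0..d} - {l}. Y l m) = (\<Sum>(l, m)\<in>index_pairs d. Y l m)"
    unfolding index_pairs_Sigma by (rule sum.Sigma) auto
  have "(- F - 2 * w * T + sum X {0..d})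
      + (\<Sum>l\<in>{0..d}. (\<Sum>m\<in>{0..d} - {l}. 2 * w * Y l m) - 2 * w * Z l - X l)
      = - F - 2 * w * (T + sum Z {0..d} - (\<Sum>l\<in>{0..d}. \<Sum>m\<in>{0..d} - {l}. Y l m))"
    by (simp add: sum_subtractf sum.distrib sum_distrib_left algebra_simps)
  also have "\<dots> = - F - 2 * w * (T + sum Z {0..d} - (\<Sum>(l, m)\<in>index_pairs d. Y l m))"
    by (simp only: pairs)
  also have "T + sum Z {0..d} - (\<Sum>(l, m)\<in>index_pairs d. Y l m) = remainder_terms mu d z w"
    unfolding remainder_terms_def T_def Z_def Y_def by simp
  finally have derivative_eq: "(- F - 2 * w * T + sum X {0..d})
      + (\<Sum>l\<in>{0..d}. (\<Sum>m\<in>{0..d} - {l}. 2 * w * Y l m) - 2 * w * Z l - X l)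
      = - F - 2 * w * remainder_terms mu d z w" .
  from deriv[unfolded derivative_eq] show ?thesis
    unfolding F_def .
qed

definition tail_integrand0 :: "(nat \<Rightarrow> real) \<Rightarrow> nat \<Rightarrow> complex \<Rightarrow> real \<Rightarrow> complex" where
  "tail_integrand0 mu d z x = PPhi mu d {} z (complex_of_real (sqrt x))
     * exp (- (omega^2 * complex_of_real x) / 2) / complex_of_real (x powr (3/2))"

definition tail_integrand1 :: "(nat \<Rightarrow> real) \<Rightarrow> nat \<Rightarrow> complex \<Rightarrow> nat \<Rightarrow> real \<Rightarrow> complex" where
  "tail_integrand1 mu d z l x = PPhi mu d {l} z (complex_of_real (sqrt x)) * (1 / complex_of_real (x^2))
     * exp (- (omega^2 * complex_of_real x / 2) * rate1 mu z l)"

definition tail_integrand2 :: "(nat \<Rightarrow> real) \<Rightarrow> nat \<Rightarrow> complex \<Rightarrow> nat \<Rightarrow> nat \<Rightarrow> real \<Rightarrow> complex" where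
  "tail_integrand2 mu d z l m x = PPhi mu d {l, m} z (complex_of_real (sqrt x))
     * (1 / complex_of_real (x powr (3/2))) * exp (- (omega^2 * complex_of_real x / 2) * rate2 mu z l m)"

definition tail_integrand :: "(nat \<Rightarrow> real) \<Rightarrow> nat \<Rightarrow> complex \<Rightarrow> real \<Rightarrow> complex" where
  "tail_integrand mu d z x = 1 / (2 * omega) * tail_integrand0 mu d z x
     + (\<Sum>l\<in>{0..d}. kappa1 mu z l * tail_integrand1 mu d z l x)
     - (\<Sum>(l, m)\<in>index_pairs d. kappa2 mu z l m * tail_integrand2 mu d z l m x)"

lemma tail_integrand_square:
  assumes y: "y > 0"
  shows "tail_integrand mu d z (y^2) = remainder_terms mu d z (complex_of_real y)"
proof -
  have "(y^2) powr (3/2) = (y powr 2) powr (3/2)"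
    using y by (simp add: powr_realpow)
  also have "\<dots> = y powr 3"
    by (simp add: powr_powr)
  also have "\<dots> = y^3"
    using y by (simp add: powr_realpow)
  finally have p: "complex_of_real ((y^2) powr (3/2)) = (complex_of_real y)^3"
    by simp
  have s: "sqrt (y^2) = y"
    using y by simp
  have "tail_integrand0 mu d z (y^2) = PPhi mu d {} z (complex_of_real y)
      * exp (- (omega^2 * (complex_of_real y)^2) / 2) / (complex_of_real y)^3"
    unfolding tail_integrand0_def s p by simp
  moreover have "tail_integrand1 mu d z l (y^2) = PPhi mu d {l} z (complex_of_real y)
      * (1 / (complex_of_real y)^4) * decay (rate1 mu z l) (complex_of_real y)" for l
    unfolding tail_integrand1_def s decay_def by (simp add: power_mult_distrib flip: power_mult)
  moreover have "tail_integrand2 mu d z l m (y^2) = PPhi mu d {l, m} z (complex_of_real y)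
      * (1 / (complex_of_real y)^3) * decay (rate2 mu z l m) (complex_of_real y)" for l m
    unfolding tail_integrand2_def s p decay_def by simp
  ultimately show ?thesis
    unfolding tail_integrand_def remainder_terms_def by (simp add: mult.assoc)
qed

lemma continuous_on_tail_integrand:
  assumes "a > 0"
  shows "continuous_on {a..} (tail_integrand0 mu d z)" "continuous_on {a..} (tail_integrand1 mu d z l)"
    "continuous_on {a..} (tail_integrand2 mu d z l m)" "continuous_on {a..} (tail_integrand mu d z)"
proof -
  show c0: "continuous_on {a..} (tail_integrand0 mu d z)"
    unfolding tail_integrand0_def[abs_def] using assms by (intro continuous_intros) auto
  show c1: "continuous_on {a..} (tail_integrand1 mu d z l)" for l
    unfolding tail_integrand1_def[abs_def] using assms by (intro continuous_intros) auto
  show c2: "continuous_on {a..} (tail_integrand2 mu d z l m)" for l m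
    unfolding tail_integrand2_def[abs_def] using assms by (intro continuous_intros) auto
  show "continuous_on {a..} (tail_integrand mu d z)"
    unfolding tail_integrand_def[abs_def] case_prod_beta
    by (intro continuous_intros c0 c1 c2)
qed

lemma has_integral_tail_integrand_substitution:
  assumes "0 < A" "A \<le> B"
  shows "((\<lambda>y. (2 * y) *\<^sub>R tail_integrand mu d z (y^2)) has_integral
      integral {A^2..B^2} (tail_integrand mu d z)) {A..B}"
proof (rule has_integral_substitution)
  show "continuous_on {A^2..B^2} (tail_integrand mu d z)"
    using assms(1) by (intro continuous_on_subset[OF continuous_on_tail_integrand(4)[of "A^2"]]) auto
  show "(\<lambda>y. y^2) ` {A..B} \<subseteq> {A^2..B^2}"
    using assms(1) by (auto intro: power_mono)
  show "A^2 \<le> B^2"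
    using assms by (intro power_mono) auto
  show "((\<lambda>y. y^2) has_real_derivative 2 * y) (at y within {A..B})" for y
    by (rule has_field_derivative_at_within) (rule DERIV_pow[of 2, simplified])
  show "A \<le> B"
    by fact
qed

lemma has_integral_Fint:
  assumes rates: "\<forall>l\<in>{0..d}. rate1 mu z l \<noteq> 0" and "0 < A" "A \<le> B"
  shows "(Fint mu d z has_integral boundary_terms mu d z (complex_of_real A)
      - boundary_terms mu d z (complex_of_real B) - integral {A^2..B^2} (tail_integrand mu d z)) {A..B}"
proof -
  define D where "D y = - (PPhi mu d {} z (complex_of_real y) * exp (- (omega^2 * (complex_of_real y)^2) / 2) * omega)
      - 2 * complex_of_real y * remainder_terms mu d z (complex_of_real y)" for y
  have "(D has_integral boundary_terms mu d z (complex_of_real B) - boundary_terms mu d z (complex_of_real A)) {A..B}"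
  proof (rule fundamental_theorem_of_calculus[OF \<open>A \<le> B\<close>])
    fix y assume "y \<in> {A..B}"
    then have "complex_of_real y \<noteq> 0" using \<open>0 < A\<close> by auto
    from has_vector_derivative_real_field[OF has_field_derivative_boundary_terms[OF this rates]]
    show "((\<lambda>y. boundary_terms mu d z (complex_of_real y)) has_vector_derivative D y) (at y within {A..B})"
      unfolding D_def by (rule has_vector_derivative_at_within)
  qed
  moreover have "((\<lambda>y. (2 * y) *\<^sub>R tail_integrand mu d z (y^2)) has_integral
      integral {A^2..B^2} (tail_integrand mu d z)) {A..B}"
    using assms(2,3) by (rule has_integral_tail_integrand_substitution)
  ultimately have "((\<lambda>y. - D y - (2 * y) *\<^sub>R tail_integrand mu d z (y^2)) has_integral
      - (boundary_terms mu d z (complex_of_real B) - boundary_terms mu d z (complex_of_real A))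
      - integral {A^2..B^2} (tail_integrand mu d z)) {A..B}"
    by (intro has_integral_diff has_integral_neg)
  then have "((\<lambda>y. - D y - (2 * y) *\<^sub>R tail_integrand mu d z (y^2)) has_integral
      boundary_terms mu d z (complex_of_real A) - boundary_terms mu d z (complex_of_real B)
      - integral {A^2..B^2} (tail_integrand mu d z)) {A..B}"
    unfolding minus_diff_eq .
  moreover have "- D y - (2 * y) *\<^sub>R tail_integrand mu d z (y^2) = Fint mu d z y" if "y \<in> {A..B}" for y
    using that \<open>0 < A\<close> unfolding D_def Fint_def
    by (simp add: tail_integrand_square scaleR_conv_of_real)
  ultimately show ?thesis
    by (rule has_integral_eq[rotated])
qed

section \<open>Estimates on the closed lower half-plane\<close>

lemma Im_rate1_nonpos: "Im z \<le> 0 \<Longrightarrow> Im (rate1 mu z l) \<le> 0"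
  unfolding rate1_def by (simp add: mult_nonneg_nonpos)

lemma Im_rate2_nonpos: "Im z \<le> 0 \<Longrightarrow> Im (rate2 mu z l m) \<le> 0"
  unfolding rate2_def by (simp add: mult_nonneg_nonpos add_nonpos_nonpos)

lemma norm_exp_omega_real: "norm (exp (- (omega^2 * complex_of_real x) / 2)) = 1"
  by (simp add: omega_squared)

lemma norm_exp_omega_rate_le:
  assumes "x \<ge> 0" "Im c \<le> 0"
  shows "norm (exp (- (omega^2 * complex_of_real x / 2) * c)) \<le> 1"
  using assms by (simp add: omega_squared mult_nonneg_nonpos)

lemma norm_decay_le:
  assumes "Im c \<le> 0"
  shows "norm (decay c (complex_of_real y)) \<le> 1"
  using norm_exp_omega_rate_le[OF zero_le_power2 assms, of y] by (simp add: decay_def)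

definition coef_bound :: "(nat \<Rightarrow> real) \<Rightarrow> nat \<Rightarrow> complex \<Rightarrow> real" where
  "coef_bound mu d z = 3^(d+1) * (1 + (\<Sum>l\<in>{0..d}. norm (kappa1 mu z l))
     + (\<Sum>(l, m)\<in>index_pairs d. norm (kappa2 mu z l m)))"

context
  fixes mu :: "nat \<Rightarrow> real" and d :: nat and z :: complex
  assumes lower: "Im z \<le> 0"
begin

lemma norm_tail_integrand0_le:
  assumes "x > 0"
  shows "norm (tail_integrand0 mu d z x) \<le> 3^(d+1) * x powr (-3/2)"
proof -
  have "norm (tail_integrand0 mu d z x) = norm (PPhi mu d {} z (complex_of_real (sqrt x))) / x powr (3/2)"
    unfolding tail_integrand0_def norm_divide norm_mult norm_exp_omega_real using assms by simp
  also have "\<dots> \<le> 3^(d+1) / x powr (3/2)"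
    by (rule divide_right_mono[OF norm_PPhi_le[OF lower]]) simp
  also have "\<dots> = 3^(d+1) * x powr (-3/2)"
    using assms by (simp add: powr_minus divide_simps)
  finally show ?thesis .
qed

lemma norm_tail_integrand1_le:
  assumes "x > 0"
  shows "norm (tail_integrand1 mu d z l x) \<le> 3^(d+1) * x powr (-2)"
proof -
  have "norm (tail_integrand1 mu d z l x) \<le> 3^(d+1) * (1 / x^2) * 1"
    unfolding tail_integrand1_def norm_mult using assms
    by (intro mult_mono norm_PPhi_le[OF lower] norm_exp_omega_rate_le Im_rate1_nonpos[OF lower])
       (auto simp: norm_divide norm_power)
  also have "\<dots> = 3^(d+1) * x powr (-2)"
    using assms by (simp add: powr_minus powr_realpow divide_inverse)
  finally show ?thesis .
qed

lemma norm_tail_integrand2_le: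
  assumes "x > 0"
  shows "norm (tail_integrand2 mu d z l m x) \<le> 3^(d+1) * x powr (-3/2)"
proof -
  have "norm (tail_integrand2 mu d z l m x) \<le> 3^(d+1) * (1 / x powr (3/2)) * 1"
    unfolding tail_integrand2_def norm_mult using assms
    by (intro mult_mono norm_PPhi_le[OF lower] norm_exp_omega_rate_le Im_rate2_nonpos[OF lower])
       (auto simp: norm_divide)
  also have "\<dots> = 3^(d+1) * x powr (-3/2)"
    using assms by (simp add: powr_minus divide_simps)
  finally show ?thesis .
qed

lemma absolutely_integrable_tail_integrands:
  assumes "a > 0"
  shows "tail_integrand0 mu d z absolutely_integrable_on {a..}"
    "tail_integrand1 mu d z l absolutely_integrable_on {a..}"
    "tail_integrand2 mu d z l m absolutely_integrable_on {a..}"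
proof -
  show "tail_integrand0 mu d z absolutely_integrable_on {a..}"
    by (rule absolutely_integrable_on_atLeast_powr_bound[where e="-3/2" and C="3^(d+1)",
          OF assms _ continuous_on_tail_integrand(1)[OF assms]])
       (use assms norm_tail_integrand0_le in auto)
  show "tail_integrand1 mu d z l absolutely_integrable_on {a..}"
    by (rule absolutely_integrable_on_atLeast_powr_bound[where e="-2" and C="3^(d+1)",
          OF assms _ continuous_on_tail_integrand(2)[OF assms]])
       (use assms norm_tail_integrand1_le in auto)
  show "tail_integrand2 mu d z l m absolutely_integrable_on {a..}"
    by (rule absolutely_integrable_on_atLeast_powr_bound[where e="-3/2" and C="3^(d+1)",
          OF assms _ continuous_on_tail_integrand(3)[OF assms]])
       (use assms norm_tail_integrand2_le in auto)
qed

lemma integral_tail_integrand: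
  assumes "a > 0"
  shows "tail_integrand mu d z integrable_on {a..}"
    "integral {a..} (tail_integrand mu d z) = 1 / (2 * omega) * integral {a..} (tail_integrand0 mu d z)
       + (\<Sum>l\<in>{0..d}. kappa1 mu z l * integral {a..} (tail_integrand1 mu d z l))
       - (\<Sum>(l, m)\<in>index_pairs d. kappa2 mu z l m * integral {a..} (tail_integrand2 mu d z l m))"
proof -
  note integrable = absolutely_integrable_tail_integrands[OF assms, THEN set_lebesgue_integral_eq_integral(1)]
  have i0: "(\<lambda>x. 1 / (2 * omega) * tail_integrand0 mu d z x) integrable_on {a..}"
    by (intro integrable_on_mult_right integrable)
  have i1: "(\<lambda>x. \<Sum>l\<in>{0..d}. kappa1 mu z l * tail_integrand1 mu d z l x) integrable_on {a..}"
    by (intro integrable_sum ballI integrable_on_mult_right integrable) simp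
  have i2: "(\<lambda>x. \<Sum>p\<in>index_pairs d. kappa2 mu z (fst p) (snd p) * tail_integrand2 mu d z (fst p) (snd p) x)
      integrable_on {a..}"
    by (intro integrable_sum ballI integrable_on_mult_right integrable) (simp add: finite_index_pairs)
  have split: "tail_integrand mu d z = (\<lambda>x. (1 / (2 * omega) * tail_integrand0 mu d z x
      + (\<Sum>l\<in>{0..d}. kappa1 mu z l * tail_integrand1 mu d z l x))
      - (\<Sum>p\<in>index_pairs d. kappa2 mu z (fst p) (snd p) * tail_integrand2 mu d z (fst p) (snd p) x))"
    unfolding tail_integrand_def by (simp add: case_prod_beta)
  show "tail_integrand mu d z integrable_on {a..}"
    unfolding split by (intro integrable_diff integrable_add i0 i1 i2)
  show "integral {a..} (tail_integrand mu d z) = 1 / (2 * omega) * integral {a..} (tail_integrand0 mu d z)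
       + (\<Sum>l\<in>{0..d}. kappa1 mu z l * integral {a..} (tail_integrand1 mu d z l))
       - (\<Sum>(l, m)\<in>index_pairs d. kappa2 mu z l m * integral {a..} (tail_integrand2 mu d z l m))"
    unfolding split integral_diff[OF integrable_add[OF i0 i1] i2] integral_add[OF i0 i1]
    using integrable by (simp add: integral_sum integrable_on_mult_right finite_index_pairs case_prod_beta)
qed

lemma norm_tail_integrand_le:
  assumes x: "x \<ge> 1"
  shows "norm (tail_integrand mu d z x) \<le> coef_bound mu d z * x powr (-3/2)"
proof -
  define C where "C = (3::real)^(d+1) * x powr (-3/2)"
  have "C \<ge> 0" by (simp add: C_def)
  have b0: "norm (1 / (2 * omega) * tail_integrand0 mu d z x) \<le> C"
  proof -
    have "norm (1 / (2 * omega)) \<le> 1"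
      by (simp add: norm_divide norm_omega) (use real_sqrt_ge_one[of 2] in linarith)
    moreover have "norm (tail_integrand0 mu d z x) \<le> C"
      using norm_tail_integrand0_le[of x] x unfolding C_def by simp
    ultimately have "norm (1 / (2 * omega)) * norm (tail_integrand0 mu d z x) \<le> 1 * C"
      by (intro mult_mono) auto
    then show ?thesis
      by (simp only: norm_mult mult_1)
  qed
  have b1: "norm (tail_integrand1 mu d z l x) \<le> C" for l
    using norm_tail_integrand1_le[of x l] x powr_mono[of "-2" "-3/2" x] unfolding C_def
    by (auto intro: order_trans)
  have b2: "norm (tail_integrand2 mu d z l m x) \<le> C" for l m
    using norm_tail_integrand2_le[of x l m] x unfolding C_def by simp
  have "norm (tail_integrand mu d z x) \<le> C + (\<Sum>l\<in>{0..d}. norm (kappa1 mu z l) * C)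
      + (\<Sum>(l, m)\<in>index_pairs d. norm (kappa2 mu z l m) * C)"
    unfolding tail_integrand_def
  proof (intro order_trans[OF norm_triangle_ineq4] add_mono order_trans[OF norm_triangle_ineq] b0)
    show "norm (\<Sum>l\<in>{0..d}. kappa1 mu z l * tail_integrand1 mu d z l x) \<le> (\<Sum>l\<in>{0..d}. norm (kappa1 mu z l) * C)"
      by (intro order_trans[OF norm_sum sum_mono]) (auto simp: norm_mult intro!: mult_left_mono b1)
    show "norm (\<Sum>(l, m)\<in>index_pairs d. kappa2 mu z l m * tail_integrand2 mu d z l m x)
        \<le> (\<Sum>(l, m)\<in>index_pairs d. norm (kappa2 mu z l m) * C)"
      by (intro order_trans[OF norm_sum sum_mono]) (auto simp: norm_mult intro!: mult_left_mono b2)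
  qed
  also have "\<dots> = coef_bound mu d z * x powr (-3/2)"
    unfolding coef_bound_def C_def
    by (simp add: sum_distrib_left sum_distrib_right case_prod_beta algebra_simps)
  finally show ?thesis .
qed

lemma norm_integral_tail_integrand_le:
  assumes B: "B \<ge> 1"
  shows "norm (integral {B^2..} (tail_integrand mu d z)) \<le> 2 * coef_bound mu d z / B"
proof -
  have B2: "B^2 \<ge> 1"
    using B by (simp add: one_le_power)
  have "norm (integral {B^2..} (tail_integrand mu d z))
      \<le> coef_bound mu d z * (- ((B^2) powr (-3/2 + 1)) / (-3/2 + 1))"
    using B2 norm_tail_integrand_le
    by (intro norm_integral_atLeast_powr_bound continuous_on_tail_integrand(4)) auto
  also have "(B^2) powr (-3/2 + 1) = 1 / B"
  proof -
    have "(B^2) powr (-3/2 + 1) = (B powr 2) powr (-1/2)"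
      using B by (simp add: powr_realpow)
    also have "\<dots> = B powr (-1)"
      by (simp add: powr_powr)
    also have "\<dots> = 1 / B"
      using B by (simp add: powr_minus inverse_eq_divide)
    finally show ?thesis .
  qed
  finally show ?thesis
    by (simp add: mult.commute)
qed

lemma norm_leading_boundary_term_le:
  assumes B: "B \<ge> 1"
  shows "norm (1 / (complex_of_real B * omega) * PPhi mu d {} z (complex_of_real B)
      * exp (- (omega^2 * (complex_of_real B)^2) / 2)) \<le> 3^(d+1) / B"
proof -
  have "norm (exp (- (omega^2 * (complex_of_real B)^2) / 2)) = 1"
    using norm_exp_omega_real[of "B^2"] by simp
  then have "norm (1 / (complex_of_real B * omega) * PPhi mu d {} z (complex_of_real B)
      * exp (- (omega^2 * (complex_of_real B)^2) / 2)) = norm (PPhi mu d {} z (complex_of_real B)) / (B * sqrt 2)"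
    using B by (simp add: norm_mult norm_divide norm_omega)
  also have "\<dots> \<le> 3^(d+1) / (B * sqrt 2)"
    using B by (intro divide_right_mono norm_PPhi_le[OF lower]) simp
  also have "\<dots> \<le> 3^(d+1) / B"
    using B by (intro divide_left_mono) auto
  finally show ?thesis .
qed

lemma norm_first_order_boundary_term_le:
  assumes B: "B \<ge> 1"
  shows "norm (kappa1 mu z l * PPhi mu d {l} z (complex_of_real B) * (1 / (complex_of_real B)^2)
      * decay (rate1 mu z l) (complex_of_real B)) \<le> norm (kappa1 mu z l) * 3^(d+1) / B"
proof -
  have "norm (kappa1 mu z l * PPhi mu d {l} z (complex_of_real B) * (1 / (complex_of_real B)^2)
      * decay (rate1 mu z l) (complex_of_real B)) \<le> norm (kappa1 mu z l) * 3^(d+1) * (1 / B^2) * 1"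
    unfolding norm_mult using B
    by (intro mult_mono norm_PPhi_le[OF lower] norm_decay_le Im_rate1_nonpos[OF lower])
       (auto simp: norm_divide norm_power)
  also have "\<dots> \<le> norm (kappa1 mu z l) * 3^(d+1) / B"
  proof -
    have "1 / B^2 \<le> 1 / B"
      using B by (simp add: power2_eq_square divide_simps)
    from mult_left_mono[OF this, of "norm (kappa1 mu z l) * 3^(d+1)"] show ?thesis
      by simp
  qed
  finally show ?thesis .
qed

lemma norm_boundary_terms_le:
  assumes B: "B \<ge> 1"
  shows "norm (boundary_terms mu d z (complex_of_real B)) \<le> coef_bound mu d z / B"
proof -
  have "norm (boundary_terms mu d z (complex_of_real B))
      \<le> 3^(d+1) / B + (\<Sum>l\<in>{0..d}. norm (kappa1 mu z l) * 3^(d+1) / B)"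
    unfolding boundary_terms_def
    using norm_leading_boundary_term_le[OF B] norm_first_order_boundary_term_le[OF B]
    by (intro order_trans[OF norm_triangle_ineq add_mono] order_trans[OF norm_sum sum_mono])
  also have "\<dots> = 3^(d+1) * (1 + (\<Sum>l\<in>{0..d}. norm (kappa1 mu z l))) / B"
    by (simp add: sum_divide_distrib sum_distrib_left algebra_simps add_divide_distrib)
  also have "\<dots> \<le> coef_bound mu d z / B"
    unfolding coef_bound_def using B
    by (intro divide_right_mono mult_left_mono) (auto intro!: sum_nonneg)
  finally show ?thesis .
qed

end

section \<open>Convergence and the expansion of the limit\<close>

definition limit_formula :: "(nat \<Rightarrow> real) \<Rightarrow> nat \<Rightarrow> complex \<Rightarrow> real \<Rightarrow> complex" where
  "limit_formula mu d z A = integral {0..A} (Fint mu d z) + boundary_terms mu d z (complex_of_real A)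
     - integral {A^2..} (tail_integrand mu d z)"

lemma continuous_on_Fint: "continuous_on S (Fint mu d z)"
  unfolding Fint_def[abs_def] by (intro continuous_intros) auto

context
  fixes mu :: "nat \<Rightarrow> real" and d :: nat and z :: complex
  assumes lower: "Im z \<le> 0" and rates: "\<forall>l\<in>{0..d}. rate1 mu z l \<noteq> 0"
begin

lemma norm_partial_integral_diff_le:
  assumes "0 < A" "A \<le> B" "1 \<le> B"
  shows "norm (integral {0..B} (Fint mu d z) - limit_formula mu d z A) \<le> 3 * coef_bound mu d z / B"
proof -
  have "integral {0..A} (Fint mu d z) + integral {A..B} (Fint mu d z) = integral {0..B} (Fint mu d z)"
    using assms
    by (intro Henstock_Kurzweil_Integration.integral_combine integrable_continuous_interval continuous_on_Fint)
       auto
  moreover have "integral {A..B} (Fint mu d z) = boundary_terms mu d z (complex_of_real A)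
      - boundary_terms mu d z (complex_of_real B) - integral {A^2..B^2} (tail_integrand mu d z)"
    using has_integral_Fint[OF rates assms(1,2)] by (rule integral_unique)
  moreover have "integral {A^2..B^2} (tail_integrand mu d z)
      = integral {A^2..} (tail_integrand mu d z) - integral {B^2..} (tail_integrand mu d z)"
  proof -
    have "A^2 \<le> B^2" using assms by (intro power_mono) auto
    moreover have "A^2 > 0" "B^2 > 0" using assms by auto
    ultimately show ?thesis
      using integral_tail_integrand(1)[OF lower] by (intro integral_atLeastAtMost_eq_diff) auto
  qed
  ultimately have "integral {0..B} (Fint mu d z) - limit_formula mu d z A
      = - boundary_terms mu d z (complex_of_real B) + integral {B^2..} (tail_integrand mu d z)"
    unfolding limit_formula_def by (simp add: algebra_simps)
  also have "norm \<dots> \<le> coef_bound mu d z / B + 2 * coef_bound mu d z / B"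
    using norm_boundary_terms_le[OF lower assms(3)] norm_integral_tail_integrand_le[OF lower assms(3)]
    by (intro order_trans[OF norm_triangle_ineq add_mono]) auto
  finally show ?thesis
    by simp
qed

lemma tendsto_partial_integral_limit_formula:
  assumes "0 < A"
  shows "((\<lambda>B. integral {0..B} (Fint mu d z)) \<longlongrightarrow> limit_formula mu d z A) at_top"
proof (rule Lim_null_comparison[THEN LIM_zero_cancel])
  show "\<forall>\<^sub>F B in at_top. norm (integral {0..B} (Fint mu d z) - limit_formula mu d z A)
      \<le> 3 * coef_bound mu d z / B"
    using eventually_ge_at_top[of "max A 1"]
    by eventually_elim (use assms in \<open>auto intro!: norm_partial_integral_diff_le\<close>)
  show "((\<lambda>B. 3 * coef_bound mu d z / B) \<longlongrightarrow> 0) at_top"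
    by (intro tendsto_divide_0[OF tendsto_const] filterlim_at_top_imp_at_infinity filterlim_ident)
qed

lemma Ilim_eq_limit_formula: "0 < A \<Longrightarrow> Ilim mu d z = limit_formula mu d z A"
  unfolding Ilim_def by (rule tendsto_Lim[OF _ tendsto_partial_integral_limit_formula]) auto

lemma tendsto_partial_integral_Ilim: "((\<lambda>B. integral {0..B} (Fint mu d z)) \<longlongrightarrow> Ilim mu d z) at_top"
  using tendsto_partial_integral_limit_formula[of 1] Ilim_eq_limit_formula[of 1] by simp

lemma norm_partial_integral_Ilim_le:
  assumes "B \<ge> 1"
  shows "norm (integral {0..B} (Fint mu d z) - Ilim mu d z) \<le> 3 * coef_bound mu d z / B"
  using norm_partial_integral_diff_le[of B B] Ilim_eq_limit_formula[of B] assms by simp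

lemma Ilim_expansion:
  assumes "0 < A"
  shows "Ilim mu d z = integral {0..A} (Fint mu d z)
     + 1 / (complex_of_real A * omega) * PPhi mu d {} z (complex_of_real A)
         * exp (- (omega^2 * (complex_of_real A)^2) / 2)
     - 1 / (2 * omega) * integral {A^2..} (tail_integrand0 mu d z)
     + (\<Sum>l\<in>{0..d}. kappa1 mu z l * PPhi mu d {l} z (complex_of_real A) * (1 / complex_of_real (A^2))
         * decay (rate1 mu z l) (complex_of_real A))
     - (\<Sum>l\<in>{0..d}. kappa1 mu z l * integral {A^2..} (tail_integrand1 mu d z l))
     + (\<Sum>(l, m)\<in>index_pairs d. kappa2 mu z l m * integral {A^2..} (tail_integrand2 mu d z l m))"
  using assms unfolding Ilim_eq_limit_formula[OF assms] limit_formula_def boundary_terms_def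
  by (simp add: integral_tail_integrand(2)[OF lower] algebra_simps)

end

section \<open>Continuity and analyticity of the limit\<close>

text \<open>\<open>Fint mu d z\<close> depends on \<open>z\<close> only through \<open>sqrtm z\<close>; as functions of that root the
  partial integrals are entire.\<close>

definition Fint_root :: "(nat \<Rightarrow> real) \<Rightarrow> nat \<Rightarrow> complex \<Rightarrow> real \<Rightarrow> complex" where
  "Fint_root mu d s t = (\<Prod>j\<in>{0..d}. Phi (complex_of_real (mu j) * s * omega * complex_of_real t))
     * exp (- (omega^2 * (complex_of_real t)^2) / 2) * omega"

lemma Fint_eq_Fint_root: "Fint mu d z = Fint_root mu d (sqrtm z)"
  unfolding Fint_def Fint_root_def PPhi_def by simp

lemma holomorphic_on_partial_integral_root: "(\<lambda>s. integral {0..N} (Fint_root mu d s)) holomorphic_on UNIV"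
proof -
  define c where "c j t = complex_of_real (mu j) * omega * complex_of_real t" for j t
  define fs where "fs s t = (\<Sum>l\<in>{0..d}. phi (c l t * s) * c l t * (\<Prod>j\<in>{0..d} - {l}. Phi (c j t * s)))
      * exp (- (omega^2 * (complex_of_real t)^2) / 2) * omega" for s t
  have root: "Fint_root mu d s t = (\<Prod>j\<in>{0..d}. Phi (c j t * s)) * exp (- (omega^2 * (complex_of_real t)^2) / 2) * omega"
    for s t
    unfolding Fint_root_def c_def by (simp add: mult_ac)
  have "(\<lambda>s. integral (cbox 0 N) (Fint_root mu d s)) holomorphic_on UNIV"
  proof (rule leibniz_rule_holomorphic[where fx=fs])
    fix s :: complex and t :: real
    have "((\<lambda>s. \<Prod>j\<in>{0..d}. Phi (c j t * s)) has_field_derivative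
        (\<Sum>l\<in>{0..d}. phi (c l t * s) * c l t * (\<Prod>j\<in>{0..d} - {l}. Phi (c j t * s)))) (at s)"
      by (intro has_field_derivative_prod DERIV_chain2[OF has_field_derivative_Phi])
         (auto intro!: derivative_eq_intros)
    then show "((\<lambda>s. Fint_root mu d s t) has_field_derivative fs s t) (at s within UNIV)"
      unfolding root fs_def by (auto intro!: derivative_eq_intros)
  next
    show "continuous_on (UNIV \<times> cbox 0 N) (\<lambda>(s, t). fs s t)"
      unfolding fs_def c_def case_prod_beta by (intro continuous_intros) auto
  next
    show "Fint_root mu d s integrable_on cbox 0 N" for s
      unfolding Fint_root_def[abs_def] by (intro integrable_continuous continuous_intros) auto
  qed simp
  then show ?thesis
    by simp
qed

lemma continuous_on_partial_integral: "continuous_on {z. Im z \<le> 0} (\<lambda>z. integral {0..N} (Fint mu d z))"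
  unfolding Fint_eq_Fint_root
  by (rule continuous_on_compose2[OF holomorphic_on_imp_continuous_on[OF holomorphic_on_partial_integral_root]
      continuous_on_sqrtm]) auto

lemma holomorphic_on_partial_integral: "(\<lambda>z. integral {0..N} (Fint mu d z)) holomorphic_on {z. Im z < 0}"
  unfolding Fint_eq_Fint_root
  using holomorphic_on_compose[OF holomorphic_on_sqrtm holomorphic_on_subset[OF holomorphic_on_partial_integral_root]]
  by (simp add: o_def)

lemma Sminus_eq: "Sminus mu d = {z. Im z \<le> 0} - (\<lambda>j. complex_of_real (- 1 / (mu j)^2)) ` {0..d}"
  unfolding Sminus_def by auto

lemma Sminus_subset_lower: "Sminus mu d \<subseteq> {z. Im z \<le> 0}"
  unfolding Sminus_def by auto

lemma rate1_nonzero: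
  assumes "\<forall>j\<in>{0..d}. mu j \<noteq> 0" "z \<in> Sminus mu d" "l \<in> {0..d}"
  shows "rate1 mu z l \<noteq> 0"
proof
  assume "rate1 mu z l = 0"
  then have "z = complex_of_real (- 1 / (mu l)^2)"
    using assms(1,3) unfolding rate1_def by (simp add: field_simps add_eq_0_iff)
  then show False
    using assms(2,3) unfolding Sminus_def by auto
qed

lemma continuous_on_coef_bound:
  assumes "\<forall>j\<in>{0..d}. mu j \<noteq> 0"
  shows "continuous_on (Sminus mu d) (coef_bound mu d)"
proof -
  have sqrtm: "continuous_on (Sminus mu d) sqrtm"
    by (rule continuous_on_subset[OF continuous_on_sqrtm Sminus_subset_lower])
  have "rate1 mu z l \<noteq> 0" if "z \<in> Sminus mu d" "l \<in> {0..d}" for z l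
    using rate1_nonzero[OF assms that] .
  then have "continuous_on (Sminus mu d) (\<lambda>z. kappa1 mu z l)" "continuous_on (Sminus mu d) (\<lambda>z. kappa2 mu z l m)"
    if "l \<in> {0..d}" for l m
    using that omega_nonzero unfolding kappa1_def kappa2_def rate1_def[symmetric]
    by (auto intro!: continuous_intros sqrtm simp: rate1_def)
  then show ?thesis
    unfolding coef_bound_def case_prod_beta index_pairs_def
    by (intro continuous_intros) auto
qed

lemma uniform_limit_partial_integrals:
  assumes mu_nz: "\<forall>j\<in>{0..d}. mu j \<noteq> 0" and T: "T \<subseteq> Sminus mu d"
    and M: "\<And>z. z \<in> T \<Longrightarrow> coef_bound mu d z \<le> M"
  shows "uniform_limit T (\<lambda>n z. integral {0..real n} (Fint mu d z)) (Ilim mu d) sequentially"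
proof (rule uniform_limitI)
  fix e :: real
  assume e: "e > 0"
  obtain N :: nat where N: "3 * \<bar>M\<bar> / e < real N"
    using reals_Archimedean2 by blast
  show "\<forall>\<^sub>F n in sequentially. \<forall>z\<in>T. dist (integral {0..real n} (Fint mu d z)) (Ilim mu d z) < e"
  proof (rule eventually_sequentiallyI[of "N + 1"], intro ballI)
    fix n z
    assume n: "N + 1 \<le> n" and z: "z \<in> T"
    have "real N * e \<le> real n * e"
      using n e by (intro mult_right_mono) auto
    moreover have "3 * \<bar>M\<bar> < real N * e"
      using N e by (simp add: divide_less_eq)
    ultimately have n1: "real n \<ge> 1" "3 * \<bar>M\<bar> < real n * e"
      using n by auto
    have "dist (integral {0..real n} (Fint mu d z)) (Ilim mu d z) \<le> 3 * coef_bound mu d z / real n"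
      unfolding dist_norm using z T Sminus_subset_lower rate1_nonzero[OF mu_nz]
      by (intro norm_partial_integral_Ilim_le n1) auto
    also have "\<dots> \<le> 3 * \<bar>M\<bar> / real n"
      using M[OF z] n1 by (intro divide_right_mono) auto
    also have "\<dots> < e"
      using n1 by (simp add: divide_less_eq mult.commute)
    finally show "dist (integral {0..real n} (Fint mu d z)) (Ilim mu d z) < e" .
  qed
qed

lemma locally_uniform_limit_partial_integrals:
  assumes mu_nz: "\<forall>j\<in>{0..d}. mu j \<noteq> 0" and z0: "z0 \<in> Sminus mu d"
  obtains r where "r > 0" "{z. Im z \<le> 0} \<inter> cball z0 r \<subseteq> Sminus mu d"
    "uniform_limit ({z. Im z \<le> 0} \<inter> cball z0 r) (\<lambda>n z. integral {0..real n} (Fint mu d z)) (Ilim mu d)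
       sequentially"
proof -
  define P where "P = (\<lambda>j. complex_of_real (- 1 / (mu j)^2)) ` {0..d}"
  have "open (- P)"
    unfolding P_def by (intro open_Compl finite_imp_closed) auto
  moreover have "z0 \<in> - P"
    using z0 unfolding Sminus_eq P_def by auto
  ultimately obtain e where e: "e > 0" "ball z0 e \<subseteq> - P"
    using open_contains_ball by blast
  define T where "T = {z. Im z \<le> 0} \<inter> cball z0 (e/2)"
  have "cball z0 (e/2) \<subseteq> ball z0 e"
    using e(1) by auto
  then have T: "T \<subseteq> Sminus mu d"
    using e(2) unfolding T_def Sminus_eq P_def[symmetric] by blast
  have "compact T"
    unfolding T_def by (intro closed_Int_compact closed_halfspace_Im_le compact_cball)
  then have "compact (coef_bound mu d ` T)"
    by (rule compact_continuous_image[OF continuous_on_subset[OF continuous_on_coef_bound[OF mu_nz] T]])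
  then obtain M where "\<forall>x\<in>coef_bound mu d ` T. norm x \<le> M"
    using compact_imp_bounded bounded_iff by metis
  then have "uniform_limit T (\<lambda>n z. integral {0..real n} (Fint mu d z)) (Ilim mu d) sequentially"
    using T by (intro uniform_limit_partial_integrals[OF mu_nz, where M=M]) auto
  then show ?thesis
    using that[of "e/2"] e(1) T unfolding T_def by auto
qed

lemma continuous_on_Ilim:
  assumes mu_nz: "\<forall>j\<in>{0..d}. mu j \<noteq> 0"
  shows "continuous_on (Sminus mu d) (Ilim mu d)"
  unfolding continuous_on_eq_continuous_within
proof
  fix z0
  assume z0: "z0 \<in> Sminus mu d"
  obtain r where r: "r > 0" and T: "{z. Im z \<le> 0} \<inter> cball z0 r \<subseteq> Sminus mu d"
    and lim: "uniform_limit ({z. Im z \<le> 0} \<inter> cball z0 r) (\<lambda>n z. integral {0..real n} (Fint mu d z))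
        (Ilim mu d) sequentially"
    using locally_uniform_limit_partial_integrals[OF mu_nz z0] by blast
  have "continuous_on ({z. Im z \<le> 0} \<inter> cball z0 r) (Ilim mu d)"
    by (rule uniform_limit_theorem[OF _ lim])
       (auto intro!: always_eventually continuous_on_subset[OF continuous_on_partial_integral])
  moreover have "z0 \<in> {z. Im z \<le> 0} \<inter> cball z0 r"
    using z0 r Sminus_subset_lower by auto
  ultimately have "continuous (at z0 within {z. Im z \<le> 0} \<inter> cball z0 r) (Ilim mu d)"
    by (simp add: continuous_on_eq_continuous_within)
  moreover have "at z0 within {z. Im z \<le> 0} \<inter> cball z0 r = at z0 within Sminus mu d"
    using r T Sminus_subset_lower by (intro at_within_nhd[of _ "ball z0 r"]) auto
  ultimately show "continuous (at z0 within Sminus mu d) (Ilim mu d)"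
    by simp
qed

lemma analytic_on_Ilim:
  assumes mu_nz: "\<forall>j\<in>{0..d}. mu j \<noteq> 0"
  shows "Ilim mu d analytic_on {z. Im z < 0}"
  unfolding analytic_on_open[OF open_halfspace_Im_lt] holomorphic_on_def
proof
  fix z0 :: complex
  assume z0: "z0 \<in> {z. Im z < 0}"
  then have "z0 \<in> Sminus mu d"
    unfolding Sminus_def by auto
  then obtain r where r: "r > 0"
    and lim: "uniform_limit ({z. Im z \<le> 0} \<inter> cball z0 r) (\<lambda>n z. integral {0..real n} (Fint mu d z))
        (Ilim mu d) sequentially"
    using locally_uniform_limit_partial_integrals[OF mu_nz] by metis
  define r' where "r' = min r (- Im z0 / 2)"
  have r': "r' > 0"
    using r z0 unfolding r'_def by auto
  have sub: "cball z0 r' \<subseteq> {z. Im z < 0}"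
    using cball_subset_lower_halfplane[of z0] z0 unfolding r'_def by auto
  obtain "Ilim mu d holomorphic_on ball z0 r'"
  proof (rule holomorphic_uniform_limit[where f="\<lambda>n z. integral {0..real n} (Fint mu d z)"])
    show "\<forall>\<^sub>F n in sequentially. continuous_on (cball z0 r') (\<lambda>z. integral {0..real n} (Fint mu d z))
        \<and> (\<lambda>z. integral {0..real n} (Fint mu d z)) holomorphic_on ball z0 r'"
      using sub ball_subset_cball[of z0 r'] subset_trans[OF ball_subset_cball sub]
      by (intro always_eventually allI conjI continuous_on_subset[OF continuous_on_partial_integral]
          holomorphic_on_subset[OF holomorphic_on_partial_integral]) auto
    show "uniform_limit (cball z0 r') (\<lambda>n z. integral {0..real n} (Fint mu d z)) (Ilim mu d) sequentially"
      using sub by (intro uniform_limit_on_subset[OF lim]) (auto simp: r'_def)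
  qed auto
  then have "Ilim mu d field_differentiable at z0"
    using r' by (intro holomorphic_on_imp_differentiable_at[of _ "ball z0 r'"]) auto
  then show "Ilim mu d field_differentiable at z0 within {z. Im z < 0}"
    by (rule field_differentiable_at_within)
qed

theorem mainTheorem10:
  fixes d :: nat and mu :: "nat \<Rightarrow> real"
  assumes mu_nz: "\<forall>j\<in>{0..d}. mu j \<noteq> 0"
  shows
   "(\<forall>z\<in>Sminus mu d.
       ((\<lambda>B. integral {0..B} (Fint mu d z)) \<longlongrightarrow> Ilim mu d z) at_top \<and>
       (\<forall>A::real. A > 0 \<longrightarrow>
          (\<lambda>x::real. PPhi mu d {} z (complex_of_real (sqrt x)) * exp (- (omega^2 * complex_of_real x) / 2)
              / complex_of_real (x powr (3/2))) absolutely_integrable_on {A^2..} \<and>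
          (\<forall>l\<in>{0..d}. (\<lambda>x::real. PPhi mu d {l} z (complex_of_real (sqrt x)) * (1 / complex_of_real (x^2))
              * exp (- (omega^2 * complex_of_real x / 2) * (1 + complex_of_real ((mu l)^2) * z)))
              absolutely_integrable_on {A^2..}) \<and>
          (\<forall>l1\<in>{0..d}. \<forall>l2\<in>{0..d}. l1 \<noteq> l2 \<longrightarrow>
              (\<lambda>x::real. PPhi mu d {l1, l2} z (complex_of_real (sqrt x)) * (1 / complex_of_real (x powr (3/2)))
              * exp (- (omega^2 * complex_of_real x / 2)
                     * (1 + complex_of_real ((mu l1)^2) * z + complex_of_real ((mu l2)^2) * z)))
              absolutely_integrable_on {A^2..}) \<and>
          Ilim mu d z =
              integral {0..A} (Fint mu d z)
            + 1 / (complex_of_real A * omega) * PPhi mu d {} z (complex_of_real A)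
                * exp (- (omega^2 * (complex_of_real A)^2) / 2)
            - 1 / (2 * omega) * integral {A^2..} (\<lambda>x::real.
                PPhi mu d {} z (complex_of_real (sqrt x)) * exp (- (omega^2 * complex_of_real x) / 2)
                / complex_of_real (x powr (3/2)))
            + (\<Sum>l\<in>{0..d}. complex_of_real (mu l) * sqrtm z /
                 (complex_of_real (sqrt (2*pi)) * omega^2 * (1 + complex_of_real ((mu l)^2) * z))
                 * PPhi mu d {l} z (complex_of_real A) * (1 / complex_of_real (A^2))
                 * exp (- (omega^2 * (complex_of_real A)^2 / 2) * (1 + complex_of_real ((mu l)^2) * z)))
            - (\<Sum>l\<in>{0..d}. complex_of_real (mu l) * sqrtm z /
                 (complex_of_real (sqrt (2*pi)) * omega^2 * (1 + complex_of_real ((mu l)^2) * z))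
                 * integral {A^2..} (\<lambda>x::real. PPhi mu d {l} z (complex_of_real (sqrt x))
                     * (1 / complex_of_real (x^2))
                     * exp (- (omega^2 * complex_of_real x / 2) * (1 + complex_of_real ((mu l)^2) * z))))
            + (\<Sum>(l1, l2)\<in>{(a, b). a \<in> {0..d} \<and> b \<in> {0..d} \<and> a \<noteq> b}.
                 complex_of_real (mu l1 * mu l2) * z /
                 (complex_of_real (4 * pi) * omega * (1 + complex_of_real ((mu l1)^2) * z))
                 * integral {A^2..} (\<lambda>x::real. PPhi mu d {l1, l2} z (complex_of_real (sqrt x))
                     * (1 / complex_of_real (x powr (3/2)))
                     * exp (- (omega^2 * complex_of_real x / 2)
                            * (1 + complex_of_real ((mu l1)^2) * z + complex_of_real ((mu l2)^2) * z))))))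
    \<and> continuous_on (Sminus mu d) (Ilim mu d)
    \<and> (Ilim mu d) analytic_on {z. Im z < 0}"
proof -
  have lower: "Im z \<le> 0" and rates: "\<forall>l\<in>{0..d}. rate1 mu z l \<noteq> 0" if "z \<in> Sminus mu d" for z
    using that Sminus_subset_lower rate1_nonzero[OF mu_nz] by auto
  show ?thesis
    apply (intro conjI ballI allI impI continuous_on_Ilim[OF mu_nz] analytic_on_Ilim[OF mu_nz])
    subgoal for z
      by (simp add: tendsto_partial_integral_Ilim lower rates)
    subgoal for z A
      using absolutely_integrable_tail_integrands(1)[OF lower, where a="A^2"]
      by (simp add: tail_integrand0_def[abs_def])
    subgoal for z A l
      using absolutely_integrable_tail_integrands(2)[OF lower, where a="A^2" and l=l]
      by (simp add: tail_integrand1_def[abs_def] rate1_def)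
    subgoal for z A l m
      using absolutely_integrable_tail_integrands(3)[OF lower, where a="A^2" and l=l and m=m]
      by (simp add: tail_integrand2_def[abs_def] rate2_def)
    subgoal for z A
      using Ilim_expansion[OF lower rates, where A=A]
      unfolding tail_integrand0_def[abs_def] tail_integrand1_def[abs_def] tail_integrand2_def[abs_def]
        kappa1_def kappa2_def decay_def rate1_def rate2_def index_pairs_def
      by simp
    done
qed

end
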